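(* Let $h(x,u)$ be a symmetric ($h(x,u)=h(u,x)$) polynomial of degree at most two in each of $x,u$, with discriminant $h_u^2-2hh_{uu}=r(x)$. Then: - if $r=0$: either $h=\frac1\alpha(x-u)^2$ for a constant $\alpha$ (q0), or $h=(\gamma_0xu+\gamma_1(x+u)+\gamma_2)^2$ for constants $\gamma_i$ (h1); - if $r=1$: either $h=\frac{1}{2\alpha}(x-u)^2-\frac\alpha2$ (q1), or $h=\gamma_0(x+u)^2+\gamma_1(x+u)+\gamma_2$ with $\gamma_1^2-4\gamma_0\gamma_2=1$ (h2); - if $r=x$: $h=\frac{1}{4\alpha}(x-u)^2-\frac\alpha2(x+u)+\frac{\alpha^3}{4}$ (q2); - if $r=x^2$: $h=\gamma_0x^2u^2+\gamma_1xu+\gamma_2$ with $\gamma_1^2-4\gamma_0\gamma_2=1$ (h3), or $h$ is of the form (q3) below with $\delta=0$; - if $r=x^2-\delta^2$: $h=\frac{\alpha}{1-\alpha^2}(x^2+u^2)-\frac{1+\alpha^2}{1-\alpha^2}xu+\delta^2\frac{1-\alpha^2}{4\alpha}$ (q3); - if $r=4x^3-g_2x-g_3$ with $g_2^3-27g_3^2\neq0$: $h=\frac{1}{\sqrt{r(\alpha)}}\Big[\big(xu+\alpha(x+u)+g_2/4\big)^2-(x+u+\alpha)(4\alpha xu-g_3)\Big]$ (q4). In each case $\alpha$ denotes a constant (for which the expression is defined) and $\sqrt{r(\alpha)}$ denotes either square root.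
   Context: Subscripts denote partial derivatives; $h_u^2-2hh_{uu}$ is the discriminant of $h$ as a quadratic polynomial in $u$ and is a polynomial in $x$ of degree at most four. *)

theory Defs
  imports "HOL-Analysis.Analysis"
begin

definition biq :: "(nat \<Rightarrow> nat \<Rightarrow> complex) \<Rightarrow> complex \<Rightarrow> complex \<Rightarrow> complex" where
  "biq a x u = (\<Sum>i\<le>2. \<Sum>j\<le>2. a i j * x ^ i * u ^ j)"

definition biq_disc :: "(nat \<Rightarrow> nat \<Rightarrow> complex) \<Rightarrow> complex \<Rightarrow> complex \<Rightarrow> complex" where
  "biq_disc a x u =
     (deriv (\<lambda>v. biq a x v) u)\<^sup>2 - 2 * biq a x u * deriv (deriv (\<lambda>v. biq a x v)) u"

end

theory Submission
  imports Defs
begin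

(* By symmetry h = p x^2 u^2 + q x u (x + u) + c (x^2 + u^2) + s x u + t (x + u) + w. Viewed as
   A u^2 + B u + C, h has h_u^2 - 2 h h_uu = B^2 - 4 A C, a quartic in x whose coefficients are
   quadratic forms in p, ..., w, so each prescribed r is a polynomial system in six unknowns.
   Its x^4 and x^3 equations force p r1 = q r2 and 4 p^2 r0 = q^2 r2 when r = r0 + r1 x + r2 x^2; hence
   p <> 0 only for the squares (h1), (h3) and for the cubic (q4), where p, q, s parametrize
   everything. For p = q = 0 the system is t^2 - 4 c w = r0, 2 t (s - 2 c) = r1,
   (s - 2 c) (s + 2 c) = r2, and the hyperbola (s - 2 c) (s + 2 c) = 1 of (q3) is parametrized
   rationally by alpha. *)

lemma quadratic_eq_0_iff:
  fixes c0 c1 c2 :: "'a::{idom, ring_char_0}"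
  shows "(\<forall>x. c0 + c1 * x + c2 * x\<^sup>2 = 0) \<longleftrightarrow> c0 = 0 \<and> c1 = 0 \<and> c2 = 0"
proof -
  have "poly [:c0, c1, c2:] x = c0 + c1 * x + c2 * x\<^sup>2" for x
    by (simp add: algebra_simps power2_eq_square)
  then have "(\<forall>x. c0 + c1 * x + c2 * x\<^sup>2 = 0) \<longleftrightarrow> [:c0, c1, c2:] = 0"
    by (metis poly_all_0_iff_0)
  then show ?thesis
    by simp
qed

lemma biq_eq_0_coeffs:
  assumes "\<forall>x u. biq b x u = 0" and "i \<le> 2" and "j \<le> 2"
  shows "b i j = 0"
proof -
  define P where "P i u = b i 0 + b i 1 * u + b i 2 * u\<^sup>2" for i u
  have "biq b x u = P 0 u + P 1 u * x + P 2 u * x\<^sup>2" for x u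
    unfolding biq_def P_def by (simp add: numeral_2_eq_2 atMost_Suc algebra_simps)
  then have "P 0 u = 0 \<and> P 1 u = 0 \<and> P 2 u = 0" for u
    using assms(1) quadratic_eq_0_iff[of "P 0 u" "P 1 u" "P 2 u"] by simp
  then have "\<forall>u. P i u = 0"
    using assms(2) by (auto simp: le_Suc_eq numeral_2_eq_2)
  then show ?thesis
    using assms(3) quadratic_eq_0_iff[of "b i 0" "b i 1" "b i 2"]
    by (auto simp: P_def le_Suc_eq numeral_2_eq_2)
qed

definition sym_biq :: "'a::comm_ring_1 \<Rightarrow> 'a \<Rightarrow> 'a \<Rightarrow> 'a \<Rightarrow> 'a \<Rightarrow> 'a \<Rightarrow> 'a \<Rightarrow> 'a \<Rightarrow> 'a" where
  "sym_biq p q c s t w x u =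
     p * x\<^sup>2 * u\<^sup>2 + q * x * u * (x + u) + c * (x\<^sup>2 + u\<^sup>2) + s * x * u + t * (x + u) + w"

lemma biq_symmetric_eq_sym_biq:
  assumes "\<forall>x u. biq a x u = biq a u x"
  shows "biq a = sym_biq (a 2 2) (a 2 1) (a 2 0) (a 1 1) (a 1 0) (a 0 0)"
proof -
  have "biq (\<lambda>i j. a i j - a j i) x u = biq a x u - biq a u x" for x u
    unfolding biq_def by (simp add: numeral_2_eq_2 atMost_Suc algebra_simps)
  then have "a i j = a j i" if "i \<le> 2" "j \<le> 2" for i j
    using assms biq_eq_0_coeffs[of "\<lambda>i j. a i j - a j i" i j] that by simp
  then have "a 0 1 = a 1 0" "a 0 2 = a 2 0" "a 1 2 = a 2 1"
    by simp_all
  then show ?thesis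
    unfolding biq_def sym_biq_def
    by (intro ext) (simp add: numeral_2_eq_2 atMost_Suc algebra_simps power2_eq_square)
qed

lemma deriv_quadratic_discriminant:
  fixes A B C u :: "'a::real_normed_field"
  defines "f \<equiv> \<lambda>v. A * v\<^sup>2 + B * v + C"
  shows "(deriv f u)\<^sup>2 - 2 * f u * deriv (deriv f) u = B\<^sup>2 - 4 * A * C"
proof -
  have "(f has_field_derivative 2 * A * v + B) (at v)" for v
    unfolding f_def by (auto intro!: derivative_eq_intros)
  then have f': "deriv f = (\<lambda>v. 2 * A * v + B)"
    by (intro ext DERIV_imp_deriv)
  have "((\<lambda>v. 2 * A * v + B) has_field_derivative 2 * A) (at u)"
    by (auto intro!: derivative_eq_intros)
  then have f'': "deriv (\<lambda>v. 2 * A * v + B) u = 2 * A"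
    by (rule DERIV_imp_deriv)
  have "(deriv f u)\<^sup>2 - 2 * f u * deriv (deriv f) u = (2 * A * u + B)\<^sup>2 - 2 * f u * (2 * A)"
    unfolding f' f'' ..
  also have "\<dots> = B\<^sup>2 - 4 * A * C"
    unfolding f_def by (simp add: algebra_simps power2_eq_square)
  finally show ?thesis .
qed

definition sym_biq_disc :: "'a::comm_ring_1 \<Rightarrow> 'a \<Rightarrow> 'a \<Rightarrow> 'a \<Rightarrow> 'a \<Rightarrow> 'a \<Rightarrow> 'a poly" where
  "sym_biq_disc p q c s t w =
     [:t\<^sup>2 - 4 * c * w, 2 * s * t - 4 * q * w - 4 * c * t, s\<^sup>2 - 2 * q * t - 4 * p * w - 4 * c\<^sup>2,
       2 * q * s - 4 * p * t - 4 * q * c, q\<^sup>2 - 4 * p * c:]"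

lemma biq_disc_eq_sym_biq_disc:
  assumes "biq a = sym_biq p q c s t w"
  shows "biq_disc a x u = poly (sym_biq_disc p q c s t w) x"
proof -
  have "(\<lambda>v. biq a x v) =
      (\<lambda>v. (p * x\<^sup>2 + q * x + c) * v\<^sup>2 + (q * x\<^sup>2 + s * x + t) * v + (c * x\<^sup>2 + t * x + w))"
    unfolding assms sym_biq_def by (simp add: algebra_simps power2_eq_square)
  then have "biq_disc a x u =
      (q * x\<^sup>2 + s * x + t)\<^sup>2 - 4 * (p * x\<^sup>2 + q * x + c) * (c * x\<^sup>2 + t * x + w)"
    unfolding biq_disc_def by (simp only: deriv_quadratic_discriminant)
  also have "\<dots> = poly (sym_biq_disc p q c s t w) x"
    unfolding sym_biq_disc_def by simp algebra
  finally show ?thesis .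
qed

lemma sym_biq_disc_quadratic_relations:
  fixes p q c s t w :: "'a::{idom, ring_char_0}"
  assumes "sym_biq_disc p q c s t w = [:r0, r1, r2:]"
  shows "p * r1 = q * r2" and "4 * p\<^sup>2 * r0 = q\<^sup>2 * r2"
proof -
  have r: "r0 = t\<^sup>2 - 4 * c * w" "r1 = 2 * s * t - 4 * q * w - 4 * c * t"
    "r2 = s\<^sup>2 - 2 * q * t - 4 * p * w - 4 * c\<^sup>2"
    and e: "2 * q * s - 4 * p * t - 4 * q * c = 0" "q\<^sup>2 - 4 * p * c = 0"
    using assms by (simp_all add: sym_biq_disc_def)
  have "2 * (p * r1) = 2 * (q * r2)"
    unfolding r using e by algebra
  then show "p * r1 = q * r2"
    by simp
  have "4 * (4 * p\<^sup>2 * r0) = 4 * (q\<^sup>2 * r2)"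
    unfolding r using e by algebra
  then show "4 * p\<^sup>2 * r0 = q\<^sup>2 * r2"
    by (simp add: ac_simps)
qed

lemma sym_biq_disc_degenerate_eq_iff:
  "sym_biq_disc 0 0 c s t w = [:r0, r1, r2:] \<longleftrightarrow>
     t\<^sup>2 - 4 * c * w = r0 \<and> 2 * t * (s - 2 * c) = r1 \<and> (s - 2 * c) * (s + 2 * c) = r2"
  by (simp add: sym_biq_disc_def algebra_simps power2_eq_square)

lemma sym_biq_square:
  "(g0 * x * u + g1 * (x + u) + g2)\<^sup>2 =
     sym_biq (g0\<^sup>2) (2 * g0 * g1) (g1\<^sup>2) (2 * g0 * g2 + 2 * g1\<^sup>2) (2 * g1 * g2) (g2\<^sup>2) x u"
  unfolding sym_biq_def by (simp add: algebra_simps power2_eq_square)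

lemma zero_discriminant_square:
  fixes a b c :: complex
  assumes "b\<^sup>2 = 4 * a * c"
  obtains g h where "a = g\<^sup>2" "b = 2 * g * h" "c = h\<^sup>2"
proof (cases "a = 0")
  case True
  with assms show ?thesis
    using that[of 0 "csqrt c"] by simp
next
  case False
  have "c = (b / (2 * csqrt a))\<^sup>2"
    using assms False by (simp add: power_divide field_simps)
  with False show ?thesis
    using that[of "csqrt a" "b / (2 * csqrt a)"] by simp
qed

lemma sym_biq_disc_eq_0_cases:
  fixes p q c s t w :: complex
  assumes "sym_biq_disc p q c s t w = 0"
  shows "(\<exists>\<alpha>. \<alpha> \<noteq> 0 \<and> (\<forall>x u. sym_biq p q c s t w x u = (x - u)\<^sup>2 / \<alpha>))
    \<or> (\<exists>\<gamma>0 \<gamma>1 \<gamma>2. \<forall>x u. sym_biq p q c s t w x u = (\<gamma>0 * x * u + \<gamma>1 * (x + u) + \<gamma>2)\<^sup>2)"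
proof -
  have e: "t\<^sup>2 = 4 * c * w" "2 * s * t - 4 * q * w - 4 * c * t = 0"
    "s\<^sup>2 - 2 * q * t - 4 * p * w - 4 * c\<^sup>2 = 0" "2 * q * s - 4 * p * t - 4 * q * c = 0"
    "q\<^sup>2 = 4 * p * c"
    using assms by (simp_all add: sym_biq_disc_def)
  consider (square) \<gamma>0 \<gamma>1 \<gamma>2 where "p = \<gamma>0\<^sup>2" "q = 2 * \<gamma>0 * \<gamma>1" "c = \<gamma>1\<^sup>2"
      "s = 2 * \<gamma>0 * \<gamma>2 + 2 * \<gamma>1\<^sup>2" "t = 2 * \<gamma>1 * \<gamma>2" "w = \<gamma>2\<^sup>2"
    | (difference) "p = 0" "q = 0" "c \<noteq> 0" "s = - 2 * c" "t = 0" "w = 0"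
  proof (cases "p = 0")
    case False
    obtain \<gamma>0 \<gamma>1 where \<gamma>: "p = \<gamma>0\<^sup>2" "q = 2 * \<gamma>0 * \<gamma>1" "c = \<gamma>1\<^sup>2"
      using zero_discriminant_square[OF e(5)] .
    define \<gamma>2 where "\<gamma>2 = (s - 2 * \<gamma>1\<^sup>2) / (2 * \<gamma>0)"
    have "\<gamma>0 \<noteq> 0"
      using False \<gamma> by auto
    then have "s = 2 * \<gamma>0 * \<gamma>2 + 2 * \<gamma>1\<^sup>2" "t = 2 * \<gamma>1 * \<gamma>2" "w = \<gamma>2\<^sup>2"
      using e(3,4) unfolding \<gamma> \<gamma>2_def by (auto simp: field_simps power2_eq_square) algebra+
    with \<gamma> show ?thesis
      using square by blast
  next
    case True
    with e have "q = 0" "(s - 2 * c) * (s + 2 * c) = 0" "t * (s - 2 * c) = 0"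
      by (auto simp: algebra_simps power2_eq_square)
    show ?thesis
    proof (cases "s = 2 * c")
      case True
      obtain \<gamma>1 \<gamma>2 where "c = \<gamma>1\<^sup>2" "t = 2 * \<gamma>1 * \<gamma>2" "w = \<gamma>2\<^sup>2"
        using zero_discriminant_square[OF e(1)] .
      then show ?thesis
        using square[of 0 \<gamma>1 \<gamma>2] True \<open>p = 0\<close> \<open>q = 0\<close> by simp
    next
      case False
      then have "s = - 2 * c" "c \<noteq> 0" "t = 0"
        using \<open>(s - 2 * c) * (s + 2 * c) = 0\<close> \<open>t * (s - 2 * c) = 0\<close> by (auto simp: eq_neg_iff_add_eq_0)
      then show ?thesis
        using difference \<open>p = 0\<close> \<open>q = 0\<close> e(1) by simp
    qed
  qed
  then show ?thesis
  proof cases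
    case square
    then show ?thesis
      by (auto simp: sym_biq_square)
  next
    case difference
    then have "\<forall>x u. sym_biq p q c s t w x u = (x - u)\<^sup>2 / (1 / c)"
      by (simp add: sym_biq_def algebra_simps power2_eq_square)
    moreover have "1 / c \<noteq> 0"
      using \<open>c \<noteq> 0\<close> by simp
    ultimately show ?thesis
      by blast
  qed
qed

lemma hyperbola_rational_parametrization:
  fixes c s :: "'a::field_char_0"
  assumes "c \<noteq> 0" and "(s - 2 * c) * (s + 2 * c) = 1"
  obtains \<alpha> where "\<alpha> \<noteq> 0" "\<alpha>\<^sup>2 \<noteq> 1" "c = \<alpha> / (1 - \<alpha>\<^sup>2)" "s = - (1 + \<alpha>\<^sup>2) / (1 - \<alpha>\<^sup>2)"
proof -
  define m where "m = s + 2 * c"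
  have c: "4 * m * c = m\<^sup>2 - 1" and s: "2 * m * s = m\<^sup>2 + 1"
    using assms(2) unfolding m_def by algebra+
  have "m \<noteq> 1" "m \<noteq> -1" "m \<noteq> 0"
    using assms c by auto
  define \<alpha> where "\<alpha> = (1 + m) / (1 - m)"
  have "(1 - m)\<^sup>2 \<noteq> 0"
    using \<open>m \<noteq> 1\<close> by simp
  have \<alpha>: "\<alpha> * (1 - m) = 1 + m"
    using \<open>m \<noteq> 1\<close> unfolding \<alpha>_def by simp
  then have "(1 - \<alpha>\<^sup>2) * (1 - m)\<^sup>2 = - 4 * m"
    by algebra
  then have "\<alpha>\<^sup>2 \<noteq> 1"
    using \<open>m \<noteq> 0\<close> by auto
  have "(c * (1 - \<alpha>\<^sup>2) - \<alpha>) * (1 - m)\<^sup>2 = 0" "(s * (1 - \<alpha>\<^sup>2) + (1 + \<alpha>\<^sup>2)) * (1 - m)\<^sup>2 = 0"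
    using \<alpha> c s by algebra+
  then have "c * (1 - \<alpha>\<^sup>2) = \<alpha>" "s * (1 - \<alpha>\<^sup>2) = - (1 + \<alpha>\<^sup>2)"
    using \<open>(1 - m)\<^sup>2 \<noteq> 0\<close> by (simp_all only: mult_eq_0_iff eq_neg_iff_add_eq_0 right_minus_eq) simp_all
  moreover have "\<alpha> \<noteq> 0"
    using \<open>m \<noteq> -1\<close> \<open>m \<noteq> 1\<close> unfolding \<alpha>_def by (simp add: add_eq_0_iff)
  ultimately show ?thesis
    using that \<open>\<alpha>\<^sup>2 \<noteq> 1\<close> by (simp add: eq_divide_eq)
qed

lemma sym_biq_q3_form:
  fixes c s w \<delta> :: complex
  assumes "c \<noteq> 0" and "(s - 2 * c) * (s + 2 * c) = 1" and "4 * c * w = \<delta>\<^sup>2"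
  shows "\<exists>\<alpha>. \<alpha> \<noteq> 0 \<and> \<alpha>\<^sup>2 \<noteq> 1 \<and>
    (\<forall>x u. sym_biq 0 0 c s 0 w x u = \<alpha> / (1 - \<alpha>\<^sup>2) * (x\<^sup>2 + u\<^sup>2) - (1 + \<alpha>\<^sup>2) / (1 - \<alpha>\<^sup>2) * x * u
                                  + \<delta>\<^sup>2 * (1 - \<alpha>\<^sup>2) / (4 * \<alpha>))"
proof -
  obtain \<alpha> where \<alpha>: "\<alpha> \<noteq> 0" "\<alpha>\<^sup>2 \<noteq> 1" "c = \<alpha> / (1 - \<alpha>\<^sup>2)" "s = - (1 + \<alpha>\<^sup>2) / (1 - \<alpha>\<^sup>2)"
    using hyperbola_rational_parametrization[OF assms(1,2)] .
  have "1 - \<alpha>\<^sup>2 \<noteq> 0"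
    using \<alpha>(2) by simp
  have "w = \<delta>\<^sup>2 * (1 - \<alpha>\<^sup>2) / (4 * \<alpha>)"
    using assms(3) \<alpha> by (simp add: field_simps)
  then have "sym_biq 0 0 c s 0 w x u = \<alpha> / (1 - \<alpha>\<^sup>2) * (x\<^sup>2 + u\<^sup>2) - (1 + \<alpha>\<^sup>2) / (1 - \<alpha>\<^sup>2) * x * u
                                  + \<delta>\<^sup>2 * (1 - \<alpha>\<^sup>2) / (4 * \<alpha>)" for x u
    using \<open>1 - \<alpha>\<^sup>2 \<noteq> 0\<close> unfolding sym_biq_def \<alpha>(3,4) by (simp add: field_simps)
  with \<alpha>(1,2) show ?thesis
    by blast
qed

lemma sym_biq_disc_eq_1_cases:
  fixes p q c s t w :: complex
  assumes "sym_biq_disc p q c s t w = [:1:]"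
  shows "(\<exists>\<alpha>. \<alpha> \<noteq> 0 \<and> (\<forall>x u. sym_biq p q c s t w x u = (x - u)\<^sup>2 / (2 * \<alpha>) - \<alpha> / 2))
    \<or> (\<exists>\<gamma>0 \<gamma>1 \<gamma>2. \<gamma>1\<^sup>2 - 4 * \<gamma>0 * \<gamma>2 = 1 \<and>
         (\<forall>x u. sym_biq p q c s t w x u = \<gamma>0 * (x + u)\<^sup>2 + \<gamma>1 * (x + u) + \<gamma>2))"
proof -
  have "p = 0"
    using sym_biq_disc_quadratic_relations(2)[of p q c s t w 1 0 0] assms by simp
  moreover from this have "q = 0"
    using assms by (simp add: sym_biq_disc_def)
  ultimately have pq: "p = 0" "q = 0" and e: "t\<^sup>2 - 4 * c * w = 1" "t * (s - 2 * c) = 0"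
    "(s - 2 * c) * (s + 2 * c) = 0"
    using assms sym_biq_disc_degenerate_eq_iff[of c s t w 1 0 0] by auto
  show ?thesis
  proof (cases "s = 2 * c")
    case True
    then have "\<forall>x u. sym_biq p q c s t w x u = c * (x + u)\<^sup>2 + t * (x + u) + w"
      using pq by (simp add: sym_biq_def algebra_simps power2_eq_square)
    then show ?thesis
      using e(1) by blast
  next
    case False
    then have "s = - 2 * c" "c \<noteq> 0" "t = 0"
      using e(2,3) by (auto simp: eq_neg_iff_add_eq_0)
    then have "4 * c * w = - 1"
      using e(1) by algebra
    then have "w = - 1 / (4 * c)"
      using \<open>c \<noteq> 0\<close> by (simp add: field_simps)
    then have "\<forall>x u. sym_biq p q c s t w x u = (x - u)\<^sup>2 / (2 * (1 / (2 * c))) - 1 / (2 * c) / 2"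
      using pq \<open>s = - 2 * c\<close> \<open>c \<noteq> 0\<close> \<open>t = 0\<close>
      by (simp add: sym_biq_def field_simps power2_eq_square)
    moreover have "1 / (2 * c) \<noteq> 0"
      using \<open>c \<noteq> 0\<close> by simp
    ultimately show ?thesis
      by blast
  qed
qed

lemma sym_biq_disc_eq_x:
  fixes p q c s t w :: complex
  assumes "sym_biq_disc p q c s t w = [:0, 1:]"
  shows "\<exists>\<alpha>. \<alpha> \<noteq> 0 \<and>
    (\<forall>x u. sym_biq p q c s t w x u = (x - u)\<^sup>2 / (4 * \<alpha>) - \<alpha> / 2 * (x + u) + \<alpha> ^ 3 / 4)"
proof -
  have "p = 0"
    using sym_biq_disc_quadratic_relations(1)[of p q c s t w 0 1 0] assms by simp
  moreover from this have "q = 0"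
    using assms by (simp add: sym_biq_disc_def)
  ultimately have pq: "p = 0" "q = 0" and e: "t\<^sup>2 - 4 * c * w = 0" "2 * t * (s - 2 * c) = 1"
    "(s - 2 * c) * (s + 2 * c) = 0"
    using assms sym_biq_disc_degenerate_eq_iff[of c s t w 0 1 0] by auto
  then have "s = - 2 * c" "c \<noteq> 0"
    by (auto simp: eq_neg_iff_add_eq_0)
  moreover from this have "8 * c * t = - 1"
    using e(2) by algebra
  ultimately have t: "t = - 1 / (8 * c)"
    by (simp add: field_simps)
  with e(1) \<open>c \<noteq> 0\<close> have w: "w = 1 / (256 * c ^ 3)"
    by (simp add: field_simps power2_eq_square power3_eq_cube)
  have "\<forall>x u. sym_biq p q c s t w x u =
      (x - u)\<^sup>2 / (4 * (1 / (4 * c))) - 1 / (4 * c) / 2 * (x + u) + (1 / (4 * c)) ^ 3 / 4"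
    using \<open>c \<noteq> 0\<close> unfolding sym_biq_def pq \<open>s = - 2 * c\<close> t w
    by (simp add: field_simps power2_eq_square power3_eq_cube)
  moreover have "1 / (4 * c) \<noteq> 0"
    using \<open>c \<noteq> 0\<close> by simp
  ultimately show ?thesis
    by blast
qed

lemma sym_biq_disc_eq_x2_cases:
  fixes p q c s t w :: complex
  assumes "sym_biq_disc p q c s t w = [:0, 0, 1:]"
  shows "(\<exists>\<gamma>0 \<gamma>1 \<gamma>2. \<gamma>1\<^sup>2 - 4 * \<gamma>0 * \<gamma>2 = 1 \<and>
         (\<forall>x u. sym_biq p q c s t w x u = \<gamma>0 * x\<^sup>2 * u\<^sup>2 + \<gamma>1 * x * u + \<gamma>2))
    \<or> (\<exists>\<alpha>. \<alpha> \<noteq> 0 \<and> \<alpha>\<^sup>2 \<noteq> 1 \<and>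
         (\<forall>x u. sym_biq p q c s t w x u = \<alpha> / (1 - \<alpha>\<^sup>2) * (x\<^sup>2 + u\<^sup>2)
                                        - (1 + \<alpha>\<^sup>2) / (1 - \<alpha>\<^sup>2) * x * u))"
proof -
  have "q = 0"
    using sym_biq_disc_quadratic_relations(1)[of p q c s t w 0 0 1] assms by simp
  with assms have e: "p * c = 0" "p * t = 0" "s\<^sup>2 - 4 * p * w - 4 * c\<^sup>2 = 1"
    by (simp_all add: sym_biq_disc_def)
  consider (h3) "c = 0" "t = 0" "s\<^sup>2 - 4 * p * w = 1"
    | (q3) "p = 0" "c \<noteq> 0" "t = 0" "w = 0" "(s - 2 * c) * (s + 2 * c) = 1"
  proof (cases "p = 0")
    case False
    then show ?thesis
      using h3 e by simp
  next
    case True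
    with assms \<open>q = 0\<close> have "t\<^sup>2 - 4 * c * w = 0" "t * (s - 2 * c) = 0" "(s - 2 * c) * (s + 2 * c) = 1"
      using sym_biq_disc_degenerate_eq_iff[of c s t w 0 0 1] by auto
    moreover from this have "t = 0"
      by auto
    ultimately show ?thesis
      using h3 q3 True by (cases "c = 0") (auto simp: algebra_simps power2_eq_square)
  qed
  then show ?thesis
  proof cases
    case h3
    then have "\<forall>x u. sym_biq p q c s t w x u = p * x\<^sup>2 * u\<^sup>2 + s * x * u + w"
      using \<open>q = 0\<close> by (simp add: sym_biq_def)
    then show ?thesis
      using h3(3) by blast
  next
    case q3
    then show ?thesis
      using sym_biq_q3_form[of c s w 0] \<open>q = 0\<close> by simp
  qed
qed

lemma sym_biq_disc_eq_x2_minus_square: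
  fixes p q c s t w \<delta> :: complex
  assumes "\<delta> \<noteq> 0" and "sym_biq_disc p q c s t w = [:- \<delta>\<^sup>2, 0, 1:]"
  shows "\<exists>\<alpha>. \<alpha> \<noteq> 0 \<and> \<alpha>\<^sup>2 \<noteq> 1 \<and>
    (\<forall>x u. sym_biq p q c s t w x u = \<alpha> / (1 - \<alpha>\<^sup>2) * (x\<^sup>2 + u\<^sup>2) - (1 + \<alpha>\<^sup>2) / (1 - \<alpha>\<^sup>2) * x * u
                                   + \<delta>\<^sup>2 * (1 - \<alpha>\<^sup>2) / (4 * \<alpha>))"
proof -
  have "q = 0"
    using sym_biq_disc_quadratic_relations(1)[of p q c s t w "- \<delta>\<^sup>2" 0 1] assms(2) by simp
  moreover from this have "p = 0"
    using sym_biq_disc_quadratic_relations(2)[of p q c s t w "- \<delta>\<^sup>2" 0 1] assms by simp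
  ultimately have pq: "p = 0" "q = 0" and e: "t\<^sup>2 - 4 * c * w = - \<delta>\<^sup>2" "t * (s - 2 * c) = 0"
    "(s - 2 * c) * (s + 2 * c) = 1"
    using assms(2) sym_biq_disc_degenerate_eq_iff[of c s t w "- \<delta>\<^sup>2" 0 1] by auto
  then have "t = 0"
    by auto
  with e(1) have "4 * c * w = \<delta>\<^sup>2"
    by simp
  with assms(1) have "c \<noteq> 0"
    by auto
  with e(3) \<open>4 * c * w = \<delta>\<^sup>2\<close> show ?thesis
    using sym_biq_q3_form[of c s w \<delta>] pq \<open>t = 0\<close> by simp
qed

lemma sym_biq_weierstrass_form:
  fixes S \<alpha> g2 g3 x u :: "'a::field_char_0"
  shows "1 / S * ((x * u + \<alpha> * (x + u) + g2 / 4)\<^sup>2 - (x + u + \<alpha>) * (4 * \<alpha> * x * u - g3)) =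
    sym_biq (1 / S) (- 2 * \<alpha> / S) (\<alpha>\<^sup>2 / S) ((g2 / 2 - 2 * \<alpha>\<^sup>2) / S) ((\<alpha> * g2 / 2 + g3) / S)
      ((g2\<^sup>2 / 16 + \<alpha> * g3) / S) x u"
  by (cases "S = 0") (simp_all add: sym_biq_def field_simps power2_eq_square)

lemma sym_biq_disc_eq_weierstrass:
  fixes p q c s t w g2 g3 :: complex
  assumes "sym_biq_disc p q c s t w = [:- g3, - g2, 0, 4:]"
  shows "\<exists>\<alpha> S. S \<noteq> 0 \<and> S\<^sup>2 = 4 * \<alpha> ^ 3 - g2 * \<alpha> - g3 \<and>
    (\<forall>x u. sym_biq p q c s t w x u =
             1 / S * ((x * u + \<alpha> * (x + u) + g2 / 4)\<^sup>2 - (x + u + \<alpha>) * (4 * \<alpha> * x * u - g3)))"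
proof -
  have e: "t\<^sup>2 - 4 * c * w = - g3" "2 * s * t - 4 * q * w - 4 * c * t = - g2"
    "s\<^sup>2 - 2 * q * t - 4 * p * w - 4 * c\<^sup>2 = 0" "2 * q * s - 4 * p * t - 4 * q * c = 4"
    "q\<^sup>2 = 4 * p * c"
    using assms by (simp_all add: sym_biq_disc_def)
  have "p \<noteq> 0"
    using e(4,5) by auto
  define \<alpha> where "\<alpha> = - q / (2 * p)"
  define \<sigma> where "\<sigma> = s - 2 * p * \<alpha>\<^sup>2"
  (* With W = x u - \<alpha> (x + u) the next four equations say h = p W^2 + \<sigma> W + w - (x + u) / p. *)
  have q: "q = - 2 * p * \<alpha>"
    using \<open>p \<noteq> 0\<close> unfolding \<alpha>_def by simp
  have "4 * p * c = 4 * p * (p * \<alpha>\<^sup>2)"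
    using e(5) unfolding q by algebra
  then have c: "c = p * \<alpha>\<^sup>2"
    using \<open>p \<noteq> 0\<close> by simp
  have s: "s = \<sigma> + 2 * p * \<alpha>\<^sup>2"
    unfolding \<sigma>_def by simp
  have t: "t = - \<alpha> * \<sigma> - 1 / p"
    using e(4) \<open>p \<noteq> 0\<close> unfolding q c s by (simp add: field_simps) algebra
  have w: "w = (\<sigma>\<^sup>2 - 4 * \<alpha>) / (4 * p)"
    using e(3) \<open>p \<noteq> 0\<close> unfolding q c s t by (simp add: field_simps) algebra
  have g2: "g2 = 2 * \<sigma> / p + 8 * \<alpha>\<^sup>2"
    using e(2) \<open>p \<noteq> 0\<close> unfolding q c s t w by (simp add: field_simps) algebra
  have g3: "g3 = - 2 * \<alpha> * \<sigma> / p - 1 / p\<^sup>2 - 4 * \<alpha> ^ 3"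
    using e(1) \<open>p \<noteq> 0\<close> unfolding q c s t w by (simp add: field_simps) algebra
  define S where "S = 1 / p"
  have "p = 1 / S" "q = - 2 * \<alpha> / S" "c = \<alpha>\<^sup>2 / S" "s = (g2 / 2 - 2 * \<alpha>\<^sup>2) / S"
    "t = (\<alpha> * g2 / 2 + g3) / S" "w = (g2\<^sup>2 / 16 + \<alpha> * g3) / S"
    using \<open>p \<noteq> 0\<close> unfolding S_def q c s t w g2 g3
    by (simp_all add: field_simps power2_eq_square power3_eq_cube)
  then have "sym_biq p q c s t w x u =
      1 / S * ((x * u + \<alpha> * (x + u) + g2 / 4)\<^sup>2 - (x + u + \<alpha>) * (4 * \<alpha> * x * u - g3))" for x u
    by (simp only: sym_biq_weierstrass_form)
  moreover have "S\<^sup>2 = 4 * \<alpha> ^ 3 - g2 * \<alpha> - g3"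
    using \<open>p \<noteq> 0\<close> unfolding S_def g2 g3 by (simp add: field_simps) algebra
  moreover have "S \<noteq> 0"
    using \<open>p \<noteq> 0\<close> unfolding S_def by simp
  ultimately show ?thesis
    by blast
qed

theorem proposition4:
  fixes a :: "nat \<Rightarrow> nat \<Rightarrow> complex"
  assumes sym: "\<forall>x u. biq a x u = biq a u x"
  shows
   "((\<forall>x u. biq_disc a x u = 0) \<longrightarrow>
       (\<exists>\<alpha>. \<alpha> \<noteq> 0 \<and> (\<forall>x u. biq a x u = (x - u)\<^sup>2 / \<alpha>))
     \<or> (\<exists>\<gamma>0 \<gamma>1 \<gamma>2. \<forall>x u. biq a x u = (\<gamma>0 * x * u + \<gamma>1 * (x + u) + \<gamma>2)\<^sup>2))
    \<and> ((\<forall>x u. biq_disc a x u = 1) \<longrightarrow>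
       (\<exists>\<alpha>. \<alpha> \<noteq> 0 \<and> (\<forall>x u. biq a x u = (x - u)\<^sup>2 / (2 * \<alpha>) - \<alpha> / 2))
     \<or> (\<exists>\<gamma>0 \<gamma>1 \<gamma>2. \<gamma>1\<^sup>2 - 4 * \<gamma>0 * \<gamma>2 = 1 \<and>
          (\<forall>x u. biq a x u = \<gamma>0 * (x + u)\<^sup>2 + \<gamma>1 * (x + u) + \<gamma>2)))
    \<and> ((\<forall>x u. biq_disc a x u = x) \<longrightarrow>
       (\<exists>\<alpha>. \<alpha> \<noteq> 0 \<and>
          (\<forall>x u. biq a x u = (x - u)\<^sup>2 / (4 * \<alpha>) - \<alpha> / 2 * (x + u) + \<alpha> ^ 3 / 4)))
    \<and> ((\<forall>x u. biq_disc a x u = x\<^sup>2) \<longrightarrow>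
       (\<exists>\<gamma>0 \<gamma>1 \<gamma>2. \<gamma>1\<^sup>2 - 4 * \<gamma>0 * \<gamma>2 = 1 \<and>
          (\<forall>x u. biq a x u = \<gamma>0 * x\<^sup>2 * u\<^sup>2 + \<gamma>1 * x * u + \<gamma>2))
     \<or> (\<exists>\<alpha>. \<alpha> \<noteq> 0 \<and> \<alpha>\<^sup>2 \<noteq> 1 \<and>
          (\<forall>x u. biq a x u = \<alpha> / (1 - \<alpha>\<^sup>2) * (x\<^sup>2 + u\<^sup>2)
                             - (1 + \<alpha>\<^sup>2) / (1 - \<alpha>\<^sup>2) * x * u)))
    \<and> (\<forall>\<delta>. \<delta> \<noteq> 0 \<longrightarrow> (\<forall>x u. biq_disc a x u = x\<^sup>2 - \<delta>\<^sup>2) \<longrightarrow>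
       (\<exists>\<alpha>. \<alpha> \<noteq> 0 \<and> \<alpha>\<^sup>2 \<noteq> 1 \<and>
          (\<forall>x u. biq a x u = \<alpha> / (1 - \<alpha>\<^sup>2) * (x\<^sup>2 + u\<^sup>2)
                             - (1 + \<alpha>\<^sup>2) / (1 - \<alpha>\<^sup>2) * x * u
                             + \<delta>\<^sup>2 * (1 - \<alpha>\<^sup>2) / (4 * \<alpha>))))
    \<and> (\<forall>g2 g3. g2 ^ 3 - 27 * g3\<^sup>2 \<noteq> 0 \<longrightarrow>
         (\<forall>x u. biq_disc a x u = 4 * x ^ 3 - g2 * x - g3) \<longrightarrow>
       (\<exists>\<alpha> s. s \<noteq> 0 \<and> s\<^sup>2 = 4 * \<alpha> ^ 3 - g2 * \<alpha> - g3 \<and>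
          (\<forall>x u. biq a x u = 1 / s * ((x * u + \<alpha> * (x + u) + g2 / 4)\<^sup>2
                                         - (x + u + \<alpha>) * (4 * \<alpha> * x * u - g3)))))"
proof -
  let ?D = "sym_biq_disc (a 2 2) (a 2 1) (a 2 0) (a 1 1) (a 1 0) (a 0 0)"
  have h: "biq a = sym_biq (a 2 2) (a 2 1) (a 2 0) (a 1 1) (a 1 0) (a 0 0)"
    using sym by (rule biq_symmetric_eq_sym_biq)
  have disc: "(\<forall>x u. biq_disc a x u = poly P x) \<longleftrightarrow> ?D = P" for P
    using biq_disc_eq_sym_biq_disc[OF h] poly_eq_poly_eq_iff[of ?D P] by (auto simp: fun_eq_iff)
  have "(\<forall>x u. biq_disc a x u = 0) \<longleftrightarrow> ?D = 0"
    "(\<forall>x u. biq_disc a x u = 1) \<longleftrightarrow> ?D = [:1:]"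
    "(\<forall>x u. biq_disc a x u = x) \<longleftrightarrow> ?D = [:0, 1:]"
    "(\<forall>x u. biq_disc a x u = x\<^sup>2) \<longleftrightarrow> ?D = [:0, 0, 1:]"
    "(\<forall>x u. biq_disc a x u = x\<^sup>2 - \<delta>\<^sup>2) \<longleftrightarrow> ?D = [:- \<delta>\<^sup>2, 0, 1:]"
    "(\<forall>x u. biq_disc a x u = 4 * x ^ 3 - g2 * x - g3) \<longleftrightarrow> ?D = [:- g3, - g2, 0, 4:]" for \<delta> g2 g3
    using disc[of 0] disc[of "[:1:]"] disc[of "[:0, 1:]"] disc[of "[:0, 0, 1:]"]
      disc[of "[:- \<delta>\<^sup>2, 0, 1:]"] disc[of "[:- g3, - g2, 0, 4:]"]
    by (simp_all add: algebra_simps power2_eq_square power3_eq_cube)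
  then show ?thesis
    unfolding h
    using sym_biq_disc_eq_0_cases sym_biq_disc_eq_1_cases sym_biq_disc_eq_x sym_biq_disc_eq_x2_cases
      sym_biq_disc_eq_x2_minus_square sym_biq_disc_eq_weierstrass
    by simp
qed

end
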